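(* Let $N$ be a positive integer and let $X$ be a $\{0,1,\dots,N\}$-valued random variable. Let $C$ be a finite set and let $\rho$ be a probability measure on $\{0,1,\dots,N\}^C$. Assume that for every $c\in C$, the distribution of $X$ is stochastically dominated by the $c$-marginal of $\rho$. Let $H$ be a $C$-valued random variable (defined on the same probability space as $X$, with arbitrary joint law). Let $Y$ be the random element of $\{0,1,\dots,N\}^C$ defined by $Y(c)=X\,\mathbf{1}_{H=c}$. Then the distribution of $Y$ is stochastically dominated by $\rho$.
   Context: $\{0,1,\dots,N\}^C$ carries the product order. Stochastic domination of $\mu$ by $\nu$ means there exist $X\sim\mu$, $Y\sim\nu$ on a common probability space with $X\le Y$ almost surely. *)

theory Defs
  imports "HOL-Probability.Probability"
begin

definition stoch_dom :: "'a::order pmf \<Rightarrow> 'a pmf \<Rightarrow> bool" where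
  "stoch_dom \<mu> \<nu> \<longleftrightarrow>
     (\<exists>p :: ('a \<times> 'a) pmf. map_pmf fst p = \<mu> \<and> map_pmf snd p = \<nu> \<and>
        (\<forall>xy\<in>set_pmf p. fst xy \<le> snd xy))"

end

theory Submission
  imports Defs
begin

text \<open>Call a pair \<open>(x, h)\<close> and a configuration \<open>f\<close> compatible if \<open>x \<le> f h\<close>; pushing a coupling of
  the law of \<open>(X, H)\<close> with \<open>\<rho>\<close> that is supported on compatible pairs forward along
  \<open>(x, h) \<mapsto> x \<one>\<^bsub>h = \<cdot>\<^esub>\<close> gives the required coupling. Such a coupling is built greedily: the atoms
  \<open>(x, h)\<close> are processed in decreasing order of \<open>x\<close>, each spread proportionally over the
  \<open>\<rho>\<close>-mass still available on \<open>{f. x \<le> f h}\<close>. This never gets stuck, because the atoms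
  processed so far all have first component at least \<open>x\<close>, so their total mass is at most
  \<open>P(X \<ge> x) \<le> \<rho>{f. x \<le> f h}\<close> by the domination of \<open>X\<close> by the \<open>h\<close>-marginal of \<open>\<rho>\<close>.\<close>

lemma stoch_dom_iff_rel_pmf: "stoch_dom \<mu> \<nu> \<longleftrightarrow> rel_pmf (\<le>) \<mu> \<nu>"
  unfolding stoch_dom_def rel_pmf.simps by fastforce

lemma proportional_share:
  fixes w :: "'a \<Rightarrow> real"
  assumes "finite A" "\<And>z. 0 \<le> w z" "0 \<le> b" "b \<le> sum w A"
  shows "\<exists>d. (\<forall>z. 0 \<le> d z \<and> d z \<le> w z) \<and> sum d A = b \<and> (\<forall>z. d z \<noteq> 0 \<longrightarrow> z \<in> A)"
proof -
  define W where "W = sum w A"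
  define d where "d z = (if z \<in> A then w z * b / W else 0)" for z
  have "0 \<le> d z \<and> d z \<le> w z" for z
  proof (cases "z \<in> A \<and> W \<noteq> 0")
    case True
    then have "W > 0" using assms(2,3,4) by (simp add: W_def sum_nonneg order_le_neq_trans)
    then have "w z * b / W \<le> w z * W / W"
      using assms(2,3,4) by (intro divide_right_mono mult_left_mono) (auto simp: W_def)
    then show ?thesis using True \<open>W > 0\<close> assms(2,3) by (simp add: d_def)
  next
    case False
    then show ?thesis using assms(2) by (auto simp: d_def)
  qed
  moreover have "sum d A = b"
  proof (cases "W = 0")
    case True
    then show ?thesis using assms(3,4) by (simp add: d_def W_def)
  next
    case False
    then show ?thesis by (simp add: d_def W_def sum_divide_distrib[symmetric] sum_distrib_right[symmetric])
  qed
  ultimately show ?thesis by (intro exI[of _ d]) (auto simp: d_def)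
qed

definition transport_plan ::
    "('a \<Rightarrow> 'b \<Rightarrow> bool) \<Rightarrow> 'a set \<Rightarrow> 'b set \<Rightarrow> ('a \<Rightarrow> real) \<Rightarrow> ('b \<Rightarrow> real) \<Rightarrow> ('a \<Rightarrow> 'b \<Rightarrow> real) \<Rightarrow> bool"
  where "transport_plan R A B supply capacity T \<longleftrightarrow>
    (\<forall>x y. 0 \<le> T x y) \<and> (\<forall>x y. T x y \<noteq> 0 \<longrightarrow> x \<in> A \<and> y \<in> B \<and> R x y) \<and>
    (\<forall>x\<in>A. (\<Sum>y\<in>B. T x y) = supply x) \<and> (\<forall>y. (\<Sum>x\<in>A. T x y) \<le> capacity y)"

text \<open>Spreading the first source proportionally over its admissible targets lowers the capacity of
  any target set by at most its supply, so the cumulative prefix condition survives for the rest.\<close>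
lemma greedy_transport_plan:
  fixes b :: "'a \<Rightarrow> real" and w :: "'b \<Rightarrow> real"
  assumes "finite Z" "distinct xs" "\<And>x. 0 \<le> b x" "\<And>z. 0 \<le> w z"
    and "\<And>ys x zs. xs = ys @ x # zs \<Longrightarrow> sum_list (map b ys) + b x \<le> sum w {z\<in>Z. R x z}"
  shows "\<exists>T. transport_plan R (set xs) Z b w T"
  using assms(2-5)
proof (induction xs arbitrary: w)
  case Nil
  then show ?case by (auto simp: transport_plan_def intro: exI[of _ "\<lambda>_ _. 0"])
next
  case (Cons a xs)
  let ?A = "{z\<in>Z. R a z}"
  obtain d where d: "\<And>z. 0 \<le> d z" "\<And>z. d z \<le> w z" "sum d ?A = b a" "\<And>z. d z \<noteq> 0 \<Longrightarrow> z \<in> ?A"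
    using proportional_share[of ?A w "b a"] Cons.prems(2,3) Cons.prems(4)[of "[]" a xs] \<open>finite Z\<close>
    by auto
  have sum_d: "sum d Z = b a"
  proof -
    have "sum d Z = sum d ?A"
      using d(4) \<open>finite Z\<close> by (intro sum.mono_neutral_right) auto
    then show ?thesis using d(3) by simp
  qed
  have "\<exists>T. transport_plan R (set xs) Z b (\<lambda>z. w z - d z) T"
  proof (rule Cons.IH)
    show "distinct xs" using Cons.prems(1) by simp
    show "0 \<le> b x" for x by (rule Cons.prems(2))
    show "0 \<le> w z - d z" for z using d(2)[of z] by simp
    fix ys x zs assume "xs = ys @ x # zs"
    then have "b a + sum_list (map b ys) + b x \<le> sum w {z\<in>Z. R x z}"
      using Cons.prems(4)[of "a # ys" x zs] by simp
    moreover have "sum d {z\<in>Z. R x z} \<le> b a"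
      unfolding sum_d[symmetric] using d(1) \<open>finite Z\<close> by (intro sum_mono2) auto
    ultimately show "sum_list (map b ys) + b x \<le> (\<Sum>z\<in>{z\<in>Z. R x z}. w z - d z)"
      by (simp add: sum_subtractf)
  qed
  then obtain T where T: "transport_plan R (set xs) Z b (\<lambda>z. w z - d z) T" ..
  have a_fresh: "a \<notin> set xs" using Cons.prems(1) by simp
  then have "(\<Sum>x\<in>set xs. (T(a := d)) x z) = (\<Sum>x\<in>set xs. T x z)" for z
    by (intro sum.cong) auto
  then have "transport_plan R (set (a # xs)) Z b w (T(a := d))"
    using T d(1,4) sum_d a_fresh by (fastforce simp: transport_plan_def algebra_simps)
  then show ?case by blast
qed

lemma measure_pmf_eq_sum_on_support:
  assumes "finite S" "set_pmf p \<subseteq> S"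
  shows "measure p A = sum (pmf p) {x\<in>S. x \<in> A}"
proof -
  have "measure p A = measure p (A \<inter> set_pmf p)"
    by (simp add: measure_Int_set_pmf)
  also have "\<dots> = sum (pmf p) (A \<inter> set_pmf p)"
    using assms by (intro measure_measure_pmf_finite) (auto intro: finite_subset)
  also have "\<dots> = sum (pmf p) {x\<in>S. x \<in> A}"
    using assms by (intro sum.mono_neutral_left) (auto simp: set_pmf_eq)
  finally show ?thesis .
qed

lemma rel_pmf_of_transport_plan:
  assumes fin: "finite (set_pmf p)" "finite (set_pmf q)"
    and plan: "transport_plan R (set_pmf p) (set_pmf q) (pmf p) (pmf q) T"
  shows "rel_pmf R p q"
proof -
  let ?A = "set_pmf p" and ?B = "set_pmf q"
  have nonneg: "\<And>x y. 0 \<le> T x y"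
    and supp: "\<And>x y. T x y \<noteq> 0 \<Longrightarrow> x \<in> ?A \<and> y \<in> ?B \<and> R x y"
    and rows: "\<And>x. x \<in> ?A \<Longrightarrow> (\<Sum>y\<in>?B. T x y) = pmf p x"
    and cols: "\<And>y. (\<Sum>x\<in>?A. T x y) \<le> pmf q y"
    using plan by (auto simp: transport_plan_def)
  have total: "(\<Sum>y\<in>?B. \<Sum>x\<in>?A. T x y) = 1"
    using rows fin by (subst sum.swap) (simp add: sum_pmf_eq_1)
  have cols_eq: "(\<Sum>x\<in>?A. T x y) = pmf q y" for y
  proof (cases "y \<in> ?B")
    case True
    have "sum (\<lambda>y. \<Sum>x\<in>?A. T x y) ?B = sum (pmf q) ?B"
      using total fin by (simp add: sum_pmf_eq_1)
    from sum_mono_inv[OF this _ True fin(2)] show ?thesis using cols by simp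
  next
    case False
    then show ?thesis using supp by (auto simp: set_pmf_eq intro: sum.neutral)
  qed
  define f where "f = case_prod T"
  have f_out: "f z = 0" if "z \<notin> ?A \<times> ?B" for z
    using supp that by (cases z) (auto simp: f_def)
  have "(\<integral>\<^sup>+z. ennreal (f z) \<partial>count_space UNIV) = (\<Sum>z\<in>?A \<times> ?B. ennreal (f z))"
    using fin f_out by (intro nn_integral_count_space') auto
  also have "\<dots> = ennreal (\<Sum>z\<in>?A \<times> ?B. f z)"
    using nonneg by (intro sum_ennreal) (simp add: f_def split: prod.split)
  also have "(\<Sum>z\<in>?A \<times> ?B. f z) = 1"
    using total by (simp add: f_def sum.cartesian_product[symmetric] sum.swap[of _ ?B])
  finally have "pmf (embed_pmf f) z = f z" for z
    using nonneg by (intro pmf_embed_pmf) (auto simp: f_def)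
  moreover define pq where "pq = embed_pmf f"
  ultimately have pmf_pq: "pmf pq (x, y) = T x y" for x y by (simp add: f_def)
  have set_pq: "set_pmf pq \<subseteq> ?A \<times> ?B"
    using supp by (auto simp: set_pmf_eq pmf_pq)
  have marginal: "pmf (map_pmf g pq) v = (\<Sum>x\<in>?A. \<Sum>y\<in>?B. if g (x, y) = v then T x y else 0)"
    for g :: "'a \<times> 'b \<Rightarrow> 'c" and v
  proof -
    have "pmf (map_pmf g pq) v = sum (pmf pq) {z\<in>?A \<times> ?B. g z = v}"
      using fin set_pq by (simp add: pmf_map measure_pmf_eq_sum_on_support[of "?A \<times> ?B"])
    also have "\<dots> = (\<Sum>z\<in>?A \<times> ?B. if g z = v then pmf pq z else 0)"
      using fin by (simp add: sum.inter_filter)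
    also have "\<dots> = (\<Sum>(x, y)\<in>?A \<times> ?B. if g (x, y) = v then T x y else 0)"
      by (intro sum.cong) (auto simp: pmf_pq)
    finally show ?thesis by (simp add: sum.cartesian_product)
  qed
  show ?thesis
  proof (rule rel_pmf.intros[of pq])
    show "R x y" if "(x, y) \<in> set_pmf pq" for x y
      using that supp by (auto simp: set_pmf_eq pmf_pq)
    show "map_pmf fst pq = p"
    proof (rule pmf_eqI)
      fix x
      have "pmf (map_pmf fst pq) x = (\<Sum>x'\<in>?A. \<Sum>y\<in>?B. if x' = x then T x' y else 0)"
        by (simp add: marginal)
      also have "\<dots> = pmf p x"
        using rows fin by (subst sum.swap) (cases "pmf p x = 0"; simp add: sum.delta set_pmf_iff)
      finally show "pmf (map_pmf fst pq) x = pmf p x" .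
    qed
    show "map_pmf snd pq = q"
    proof (rule pmf_eqI)
      fix y
      have "pmf (map_pmf snd pq) y = (\<Sum>x\<in>?A. \<Sum>y'\<in>?B. if y' = y then T x y' else 0)"
        by (simp add: marginal)
      also have "\<dots> = pmf q y"
        using cols_eq[of y] fin by (cases "pmf q y = 0"; simp add: sum.delta set_pmf_iff)
      finally show "pmf (map_pmf snd pq) y = pmf q y" .
    qed
  qed
qed

lemma rel_pmf_of_upper_tail_bounds:
  fixes k :: "'a \<Rightarrow> 'k::linorder"
  assumes fin: "finite (set_pmf p)" "finite (set_pmf q)"
    and dom: "\<And>x. x \<in> set_pmf p \<Longrightarrow> measure p {x'. k x \<le> k x'} \<le> measure q {y. R x y}"
  shows "rel_pmf R p q"
proof -
  obtain xs0 where xs0: "distinct xs0" "set xs0 = set_pmf p"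
    using finite_distinct_list[OF fin(1)] by blast
  define xs where "xs = rev (sort_key k xs0)"
  have xs: "distinct xs" "set xs = set_pmf p" using xs0 by (simp_all add: xs_def)
  have "sorted_wrt (\<lambda>x x'. k x' \<le> k x) xs"
    using sorted_sort_key[of k xs0] by (simp add: xs_def sorted_wrt_rev sorted_wrt_map)
  then have prefix_above: "\<forall>x'\<in>set ys. k x \<le> k x'" if "xs = ys @ x # zs" for ys x zs
    using that by (simp add: sorted_wrt_append)
  have "sum_list (map (pmf p) ys) + pmf p x \<le> sum (pmf q) {y\<in>set_pmf q. R x y}"
    if split: "xs = ys @ x # zs" for ys x zs
  proof -
    have "sum_list (map (pmf p) ys) + pmf p x = sum (pmf p) (insert x (set ys))"
      using xs(1) split by (simp add: sum_list_distinct_conv_sum_set)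
    also have "\<dots> \<le> sum (pmf p) {x'\<in>set_pmf p. k x \<le> k x'}"
      using prefix_above[OF split] xs split fin(1) by (intro sum_mono2) auto
    also have "\<dots> = measure p {x'. k x \<le> k x'}"
      using fin(1) by (simp add: measure_pmf_eq_sum_on_support)
    also have "\<dots> \<le> measure q {y. R x y}"
      using dom xs(2) split by (metis in_set_conv_decomp)
    also have "\<dots> = sum (pmf q) {y\<in>set_pmf q. R x y}"
      using fin(2) by (simp add: measure_pmf_eq_sum_on_support)
    finally show ?thesis .
  qed
  then obtain T where "transport_plan R (set xs) (set_pmf q) (pmf p) (pmf q) T"
    using greedy_transport_plan[OF fin(2) xs(1), of "pmf p" "pmf q" R] by auto
  then show ?thesis
    using fin xs(2) by (intro rel_pmf_of_transport_plan) simp_all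
qed

theorem lemma2p11:
  fixes N :: nat
    and XH :: "(nat \<times> 'c::finite) pmf"
    and \<rho> :: "('c \<Rightarrow> nat) pmf"
  assumes "N > 0"
    and "\<forall>xh\<in>set_pmf XH. fst xh \<le> N"
    and "\<forall>f\<in>set_pmf \<rho>. \<forall>c. f c \<le> N"
    and "\<forall>c. stoch_dom (map_pmf fst XH) (map_pmf (\<lambda>f. f c) \<rho>)"
  shows "stoch_dom (map_pmf (\<lambda>xh. (\<lambda>c. if snd xh = c then fst xh else 0)) XH) \<rho>"
proof -
  have "finite (set_pmf XH)"
    by (rule finite_subset[of _ "{..N} \<times> UNIV"]) (use assms(2) in auto)
  moreover have "finite (set_pmf \<rho>)"
    by (rule finite_subset[of _ "PiE UNIV (\<lambda>_. {..N})"]) (use assms(3) in \<open>auto simp: finite_PiE\<close>)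
  moreover have "measure XH {xh'. fst xh \<le> fst xh'} \<le> measure \<rho> {f. fst xh \<le> f (snd xh)}" for xh
  proof -
    have "rel_pmf (\<le>) (map_pmf fst XH) (map_pmf (\<lambda>f. f (snd xh)) \<rho>)"
      using assms(4) by (simp add: stoch_dom_iff_rel_pmf)
    from rel_pmf_measureD[OF this, of "{x. fst xh \<le> x}"]
    have "measure XH {xh'. fst xh \<le> fst xh'} \<le> measure \<rho> {f. \<exists>x\<ge>fst xh. x \<le> f (snd xh)}"
      by (simp add: vimage_def)
    also have "{f. \<exists>x\<ge>fst xh. x \<le> f (snd xh)} = {f. fst xh \<le> f (snd xh)}"
      using order_trans by blast
    finally show ?thesis .
  qed
  ultimately have "rel_pmf (\<lambda>xh f. fst xh \<le> f (snd xh)) XH \<rho>"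
    by (rule rel_pmf_of_upper_tail_bounds[where k = fst])
  then show ?thesis
    unfolding stoch_dom_iff_rel_pmf pmf.rel_map
    by (rule pmf.rel_mono_strong) (simp add: le_fun_def)
qed

end
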